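(* The set $\mathcal{I}_{\mathrm{str}}(C_{01})$ has the cardinality of the continuum.
   Context: Let $\mathbf{2}=\{0,1\}$. A partial function of arity $n$ on $\mathbf{2}$ is a map $f:\operatorname{dom} f\to\mathbf{2}$ with $\operatorname{dom} f\subseteq \mathbf{2}^n$; it is total if $\operatorname{dom} f=\mathbf{2}^n$. $P_{\mathbf{2}}$ is the set of all partial functions, $O_{\mathbf{2}}$ the set of total ones. Composition $F=f(g_1,\dots,g_n)$ is given by $F(\mathbf{x})=f(g_1(\mathbf{x}),\dots,g_n(\mathbf{x}))$ on $\operatorname{dom} F=\{\mathbf{x}\in\bigcap_i\operatorname{dom} g_i : (g_1(\mathbf{x}),\dots,g_n(\mathbf{x}))\in\operatorname{dom} f\}$. A partial clone is a composition-closed subset of $P_{\mathbf{2}}$ containing all projections; a total clone is one contained in $O_{\mathbf{2}}$. A partial clone $X$ is strong if it contains every restriction of each of its members. For a total clone $C$, $\mathcal{I}_{\mathrm{str}}(C)$ is the set of all strong partial clones $X$ with $X\cap O_{\mathbf{2}}=C$. $C_{01}$ is the total clone generated by the constant functions $c_0$ and $c_1$ (it consists of all projections and all constant functions). *)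

theory Defs
  imports Complex_Main "HOL-Library.Equipollence"
begin

text \<open>A partial Boolean function of arity n is encoded as a pair (n, f) where
f maps argument tuples (Boolean lists of length n) to Some value if the tuple
lies in the domain and to None otherwise; f is None on lists of the wrong length.
Arities are at least 1, as is customary in clone theory.\<close>

type_synonym pfun = "nat \<times> (bool list \<Rightarrow> bool option)"

definition wf_pfun :: "pfun \<Rightarrow> bool" where
  "wf_pfun p \<longleftrightarrow> 1 \<le> fst p \<and> (\<forall>xs. length xs \<noteq> fst p \<longrightarrow> snd p xs = None)"

definition P2 :: "pfun set" where
  "P2 = {p. wf_pfun p}"

definition O2 :: "pfun set" where
  "O2 = {p. wf_pfun p \<and> (\<forall>xs. length xs = fst p \<longrightarrow> snd p xs \<noteq> None)}"

definition proj :: "nat \<Rightarrow> nat \<Rightarrow> pfun" where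
  "proj n i = (n, \<lambda>xs. if length xs = n then Some (xs ! i) else None)"

definition comp_pf :: "nat \<Rightarrow> pfun \<Rightarrow> pfun list \<Rightarrow> pfun" where
  "comp_pf m f gs = (m, \<lambda>xs. if length xs = m \<and> (\<forall>g\<in>set gs. snd g xs \<noteq> None)
                              then snd f (map (\<lambda>g. the (snd g xs)) gs) else None)"

definition partial_clone :: "pfun set \<Rightarrow> bool" where
  "partial_clone X \<longleftrightarrow> X \<subseteq> P2
     \<and> (\<forall>n i. 1 \<le> n \<and> i < n \<longrightarrow> proj n i \<in> X)
     \<and> (\<forall>f\<in>X. \<forall>gs m. length gs = fst f \<longrightarrow> set gs \<subseteq> X \<longrightarrow> (\<forall>g\<in>set gs. fst g = m)
           \<longrightarrow> comp_pf m f gs \<in> X)"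

definition total_clone :: "pfun set \<Rightarrow> bool" where
  "total_clone C \<longleftrightarrow> partial_clone C \<and> C \<subseteq> O2"

definition restriction_of :: "pfun \<Rightarrow> pfun \<Rightarrow> bool" where
  "restriction_of g f \<longleftrightarrow> fst g = fst f \<and> (\<forall>xs. snd g xs \<noteq> None \<longrightarrow> snd g xs = snd f xs)"

definition strong_partial_clone :: "pfun set \<Rightarrow> bool" where
  "strong_partial_clone X \<longleftrightarrow> partial_clone X \<and> (\<forall>f\<in>X. \<forall>g. restriction_of g f \<longrightarrow> g \<in> X)"

definition clone_gen :: "pfun set \<Rightarrow> pfun set" where
  "clone_gen F = \<Inter>{X. partial_clone X \<and> F \<subseteq> X}"

definition c0 :: pfun where
  "c0 = (1, \<lambda>xs. if length xs = 1 then Some False else None)"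

definition c1 :: pfun where
  "c1 = (1, \<lambda>xs. if length xs = 1 then Some True else None)"

definition C01 :: "pfun set" where
  "C01 = clone_gen {c0, c1}"

definition I_str :: "pfun set \<Rightarrow> pfun set set" where
  "I_str C = {X. strong_partial_clone X \<and> X \<inter> O2 = C}"

end

theory Submission
  imports Defs "HOL-Analysis.Abstract_Topology_2"
begin

text \<open>The partial functions preserving a set R of relations form a strong partial clone pPol R.
If R contains every ternary relation containing the constant triples, a total function in
pPol R is a projection or a constant: the set of tuples it maps to 1 is closed under pointwise
conjunction, the set it maps to 0 under disjunction, so a single coordinate separates them. If
moreover every relation of R contains its constant tuples, pPol R meets O2 exactly in C01.

The partial n-ary function co_unit_fun n, defined only on the zero vector (value 0) and on the
n vectors with a single zero (value 1), preserves every relation of arity below n, and it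
preserves the (k+1)-ary relation false_count_rel k of tuples with 0, 2 or k+1 zeros iff k \<noteq> n:
the matrix whose rows are the whole domain has columns in false_count_rel n but its image is
not, while for k \<noteq> n the numbers of zeros in the columns and in the image pin each other
down. Dropping false_count_rel (k + 4) for the k in a set A of naturals therefore yields
pairwise distinct clones, continuum many; there are no more, since P2 is countable.\<close>

lemma count_list_map: "count_list (map f xs) y = length (filter (\<lambda>x. f x = y) xs)"
  by (induction xs) auto

lemma length_filter_mem_eq_sum_count_list:
  assumes "finite S" shows "length (filter (\<lambda>x. x \<in> S) xs) = sum (count_list xs) S"
proof -
  have "count_list (filter (\<lambda>x. x \<in> S) xs) s = count_list xs s" if "s \<in> S" for s
    using that by (induction xs) auto
  then have "sum (count_list xs) S = sum (count_list (filter (\<lambda>x. x \<in> S) xs)) S"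
    by simp
  also have "\<dots> = length (filter (\<lambda>x. x \<in> S) xs)"
    by (rule sum_count_set) (auto simp: assms)
  finally show ?thesis by simp
qed

lemma count_list_replicate: "count_list (replicate n x) y = (if x = y then n else 0)"
  by (induction n) auto

section \<open>Partial polymorphisms\<close>

definition preserves :: "bool list set \<Rightarrow> nat \<Rightarrow> pfun \<Rightarrow> bool" where
  "preserves \<rho> N f \<longleftrightarrow> (\<forall>ps. length ps = N \<longrightarrow> (\<forall>p\<in>set ps. snd f p \<noteq> None) \<longrightarrow>
     (\<forall>i<fst f. map (\<lambda>p. p ! i) ps \<in> \<rho>) \<longrightarrow> map (\<lambda>p. the (snd f p)) ps \<in> \<rho>)"

text \<open>Relations are paired with their arity, which a set of lists does not determine.\<close>

definition pPol :: "(bool list set \<times> nat) set \<Rightarrow> pfun set" where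
  "pPol R = {f. wf_pfun f \<and> (\<forall>\<rho> N. (\<rho>, N) \<in> R \<longrightarrow> preserves \<rho> N f)}"

lemma preservesI:
  assumes "\<And>ps. length ps = N \<Longrightarrow> \<forall>p\<in>set ps. snd f p \<noteq> None \<Longrightarrow>
             \<forall>i<fst f. map (\<lambda>p. p ! i) ps \<in> \<rho> \<Longrightarrow> map (\<lambda>p. the (snd f p)) ps \<in> \<rho>"
  shows "preserves \<rho> N f"
  using assms unfolding preserves_def by blast

lemma preservesD:
  assumes "preserves \<rho> (length ps) f" "\<forall>p\<in>set ps. snd f p \<noteq> None"
    "\<forall>i<fst f. map (\<lambda>p. p ! i) ps \<in> \<rho>"
  shows "map (\<lambda>p. the (snd f p)) ps \<in> \<rho>"
  using assms unfolding preserves_def by blast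

lemma preserves_proj: "i < n \<Longrightarrow> preserves \<rho> N (proj n i)"
proof (rule preservesI)
  fix ps :: "bool list list"
  assume "i < n" "\<forall>p\<in>set ps. snd (proj n i) p \<noteq> None" "\<forall>k<fst (proj n i). map (\<lambda>p. p ! k) ps \<in> \<rho>"
  moreover from this have "map (\<lambda>p. the (snd (proj n i) p)) ps = map (\<lambda>p. p ! i) ps"
    by (auto simp: proj_def split: if_splits)
  ultimately show "map (\<lambda>p. the (snd (proj n i) p)) ps \<in> \<rho>"
    by (metis fst_conv proj_def)
qed

lemma preserves_comp_pf:
  assumes f: "preserves \<rho> N f" and gs: "\<forall>g\<in>set gs. preserves \<rho> N g \<and> fst g = m"
    and len: "length gs = fst f"
  shows "preserves \<rho> N (comp_pf m f gs)"
proof (rule preservesI)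
  fix ps :: "bool list list"
  assume l: "length ps = N" and d: "\<forall>p\<in>set ps. snd (comp_pf m f gs) p \<noteq> None"
    and c: "\<forall>i<fst (comp_pf m f gs). map (\<lambda>p. p ! i) ps \<in> \<rho>"
  define u where "u p = map (\<lambda>g. the (snd g p)) gs" for p
  have dom: "\<forall>g\<in>set gs. snd g p \<noteq> None" "snd (comp_pf m f gs) p = snd f (u p)"
    if "p \<in> set ps" for p
    using d that unfolding comp_pf_def u_def snd_conv by (metis (lifting))+
  have "map (\<lambda>p. the (snd g p)) ps \<in> \<rho>" if "g \<in> set gs" for g
    using preservesD[of \<rho> ps g] gs c l dom(1) that by (simp add: comp_pf_def)
  then have "\<forall>j<fst f. map (\<lambda>q. q ! j) (map u ps) \<in> \<rho>"
    using len by (simp add: u_def o_def)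
  moreover have "\<forall>q\<in>set (map u ps). snd f q \<noteq> None"
    using d dom(2) by auto
  ultimately have "map (\<lambda>q. the (snd f q)) (map u ps) \<in> \<rho>"
    using preservesD[of \<rho> "map u ps" f] f l by simp
  then show "map (\<lambda>p. the (snd (comp_pf m f gs) p)) ps \<in> \<rho>"
    by (simp add: dom(2) cong: map_cong)
qed

lemma preserves_restriction:
  assumes "preserves \<rho> N f" "restriction_of g f"
  shows "preserves \<rho> N g"
proof (rule preservesI)
  fix ps :: "bool list list"
  assume "length ps = N" "\<forall>p\<in>set ps. snd g p \<noteq> None" "\<forall>i<fst g. map (\<lambda>p. p ! i) ps \<in> \<rho>"
  moreover from this have "map (\<lambda>p. the (snd g p)) ps = map (\<lambda>p. the (snd f p)) ps"
    using assms(2) by (auto simp: restriction_of_def)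
  ultimately show "map (\<lambda>p. the (snd g p)) ps \<in> \<rho>"
    using assms preservesD[of \<rho> ps f] by (metis restriction_of_def)
qed

lemma strong_partial_clone_pPol: "strong_partial_clone (pPol R)"
  unfolding strong_partial_clone_def partial_clone_def
proof (intro conjI allI impI ballI)
  show "pPol R \<subseteq> P2"
    by (auto simp: pPol_def P2_def)
  show "proj n i \<in> pPol R" if "1 \<le> n \<and> i < n" for n i
    using that preserves_proj by (auto simp: pPol_def wf_pfun_def proj_def)
next
  fix f gs m
  assume f: "f \<in> pPol R" and len: "length gs = fst f" and gs: "set gs \<subseteq> pPol R"
    and ar: "\<forall>g\<in>set gs. fst g = m"
  obtain g where "g \<in> set gs"
    using f len by (cases gs) (auto simp: pPol_def wf_pfun_def)
  then have "1 \<le> m"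
    using gs ar by (auto simp: pPol_def wf_pfun_def)
  then have "wf_pfun (comp_pf m f gs)"
    by (simp add: wf_pfun_def comp_pf_def)
  moreover have "preserves \<rho> N (comp_pf m f gs)" if "(\<rho>, N) \<in> R" for \<rho> N
    using that f gs ar len by (intro preserves_comp_pf) (auto simp: pPol_def)
  ultimately show "comp_pf m f gs \<in> pPol R"
    by (simp add: pPol_def)
next
  fix f g assume f: "f \<in> pPol R" and g: "restriction_of g f"
  then have "wf_pfun g"
    by (fastforce simp: pPol_def wf_pfun_def restriction_of_def)
  then show "g \<in> pPol R"
    using f g preserves_restriction unfolding pPol_def by blast
qed

section \<open>Total functions preserving the reflexive ternary relations\<close>

lemma conj_closed_common_true_coordinate:
  fixes v :: "bool list \<Rightarrow> bool"
  assumes C: "\<And>x y z. length x = n \<Longrightarrow> length y = n \<Longrightarrow> length z = n \<Longrightarrow>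
      (v x = v y \<and> v y = v z) \<or> (\<exists>i<n. x ! i = v x \<and> y ! i = v y \<and> z ! i = v z)"
    and a: "length a = n" "v a" and zero: "\<not> v (replicate n False)"
  shows "\<exists>i<n. \<forall>x. length x = n \<longrightarrow> v x \<longrightarrow> x ! i"
proof -
  define T where "T = {x. length x = n \<and> v x}"
  have conj_closed: "map2 (\<and>) x y \<in> T" if "x \<in> T" "y \<in> T" for x y
    using that C[of x y "map2 (\<and>) x y"] by (auto simp: T_def)
  have "\<exists>m\<in>T. \<forall>x\<in>S. \<forall>i<n. m ! i \<longrightarrow> x ! i" if "finite S" "S \<subseteq> T" for S
    using that
  proof (induction S rule: finite_induct)
    case empty
    show ?case using a by (auto simp: T_def)
  next
    case (insert x S)
    then obtain m where m: "m \<in> T" "\<forall>y\<in>S. \<forall>i<n. m ! i \<longrightarrow> y ! i" by auto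
    moreover have "x \<in> T" using insert.prems by simp
    ultimately show ?case
      by (intro bexI[of _ "map2 (\<and>) x m"] conj_closed) (auto simp: T_def)
  qed
  moreover have "finite T"
    using finite_lists_length_eq[of "UNIV :: bool set" n] by (simp add: T_def)
  ultimately obtain m where m: "m \<in> T" "\<forall>x\<in>T. \<forall>i<n. m ! i \<longrightarrow> x ! i"
    by blast
  have "m \<noteq> replicate n False"
    using m(1) zero by (auto simp: T_def)
  then obtain i where "i < n" "m ! i"
    using m(1) by (auto simp: T_def list_eq_iff_nth_eq)
  then show ?thesis
    using m(2) by (auto simp: T_def)
qed

lemma constant_or_projection:
  fixes v :: "bool list \<Rightarrow> bool"
  assumes C: "\<And>x y z. length x = n \<Longrightarrow> length y = n \<Longrightarrow> length z = n \<Longrightarrow>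
      (v x = v y \<and> v y = v z) \<or> (\<exists>i<n. x ! i = v x \<and> y ! i = v y \<and> z ! i = v z)"
  shows "(\<exists>b. \<forall>x. length x = n \<longrightarrow> v x = b) \<or> (\<exists>i<n. \<forall>x. length x = n \<longrightarrow> v x = x ! i)"
proof (cases "\<exists>b. \<forall>x. length x = n \<longrightarrow> v x = b")
  case False
  then obtain a b where a: "length a = n" "\<not> v a" and b: "length b = n" "v b"
    by metis
  have v1: "v (replicate n True)"
    using C[of b "replicate n True" "replicate n True"] b by auto
  have v0: "\<not> v (replicate n False)"
    using C[of a "replicate n False" "replicate n False"] a by auto
  obtain i where i: "i < n" "\<forall>x. length x = n \<longrightarrow> v x \<longrightarrow> x ! i"
    using conj_closed_common_true_coordinate[OF C b v0] by blast
  define w where "w x = (\<not> v (map Not x))" for x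
  have "\<exists>j<n. \<forall>x. length x = n \<longrightarrow> w x \<longrightarrow> x ! j"
  proof (rule conj_closed_common_true_coordinate)
    show "(w x = w y \<and> w y = w z) \<or> (\<exists>i<n. x ! i = w x \<and> y ! i = w y \<and> z ! i = w z)"
      if "length x = n" "length y = n" "length z = n" for x y z
      using C[of "map Not x" "map Not y" "map Not z"] that by (auto simp: w_def)
    show "length (map Not a) = n" "w (map Not a)"
      using a by (simp_all add: w_def o_def)
    show "\<not> w (replicate n False)"
      using v1 by (simp add: w_def)
  qed
  then obtain j where j: "j < n" and jw: "\<forall>x. length x = n \<longrightarrow> w x \<longrightarrow> x ! j"
    by blast
  have j0: "\<not> x ! j" if "length x = n" "\<not> v x" for x
    using jw[rule_format, of "map Not x"] that j by (simp add: w_def o_def)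
  have "i = j"
  proof (rule ccontr)
    assume "i \<noteq> j"
    then have "\<not> v ((replicate n False)[j := True])"
      using i(1) i(2)[rule_format, of "(replicate n False)[j := True]"] by (auto simp: nth_list_update)
    then show False
      using j0[of "(replicate n False)[j := True]"] j by simp
  qed
  then show ?thesis
    using i j0 by blast
qed simp

definition const_pf :: "nat \<Rightarrow> bool \<Rightarrow> pfun" where
  "const_pf n b = (n, \<lambda>xs. if length xs = n then Some b else None)"

lemma preserves_const_pf:
  assumes "replicate N b \<in> \<rho>" shows "preserves \<rho> N (const_pf n b)"
proof (rule preservesI)
  fix ps :: "bool list list"
  assume "length ps = N" "\<forall>p\<in>set ps. snd (const_pf n b) p \<noteq> None"
  then have "map (\<lambda>p. the (snd (const_pf n b) p)) ps = replicate N b"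
    by (auto simp: const_pf_def map_replicate_const[symmetric] split: if_splits cong: map_cong)
  then show "map (\<lambda>p. the (snd (const_pf n b) p)) ps \<in> \<rho>"
    using assms by simp
qed

lemma C01_subset: "partial_clone X \<Longrightarrow> c0 \<in> X \<Longrightarrow> c1 \<in> X \<Longrightarrow> C01 \<subseteq> X"
  by (auto simp: C01_def clone_gen_def)

lemma proj_in_C01: "1 \<le> n \<Longrightarrow> i < n \<Longrightarrow> proj n i \<in> C01"
  by (auto simp: C01_def clone_gen_def partial_clone_def)

lemma const_pf_in_C01:
  assumes "1 \<le> n" shows "const_pf n b \<in> C01"
proof -
  have "const_pf n b = comp_pf n (if b then c1 else c0) [proj n 0]"
    by (auto simp: comp_pf_def const_pf_def proj_def c0_def c1_def fun_eq_iff)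
  moreover have "comp_pf n (if b then c1 else c0) [proj n 0] \<in> X"
    if "partial_clone X" "c0 \<in> X" "c1 \<in> X" for X
    using that assms unfolding partial_clone_def
    by (auto simp: c0_def c1_def proj_def)
  ultimately show ?thesis
    by (auto simp: C01_def clone_gen_def)
qed

lemma partial_clone_O2: "partial_clone O2"
  unfolding partial_clone_def
proof (intro conjI allI impI ballI)
  show "O2 \<subseteq> P2"
    by (auto simp: O2_def P2_def)
  show "proj n i \<in> O2" if "1 \<le> n \<and> i < n" for n i
    using that by (auto simp: O2_def wf_pfun_def proj_def)
next
  fix f gs m
  assume f: "f \<in> O2" and len: "length gs = fst f" and gs: "set gs \<subseteq> O2"
    and ar: "\<forall>g\<in>set gs. fst g = m"
  obtain g where "g \<in> set gs"
    using f len by (cases gs) (auto simp: O2_def wf_pfun_def)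
  then have "1 \<le> m"
    using gs ar by (auto simp: O2_def wf_pfun_def)
  moreover have "snd (comp_pf m f gs) xs \<noteq> None" if "length xs = m" for xs
  proof -
    have "snd g xs \<noteq> None" if "g \<in> set gs" for g
      using that gs ar \<open>length xs = m\<close> by (auto simp: O2_def)
    moreover have "snd f (map (\<lambda>g. the (snd g xs)) gs) \<noteq> None"
      using f len by (simp add: O2_def)
    ultimately show ?thesis
      using that by (simp add: comp_pf_def)
  qed
  ultimately show "comp_pf m f gs \<in> O2"
    by (simp add: O2_def wf_pfun_def comp_pf_def)
qed

lemma C01_subset_O2: "C01 \<subseteq> O2"
  by (rule C01_subset[OF partial_clone_O2]) (auto simp: O2_def wf_pfun_def c0_def c1_def)

lemma total_preserving_reflexive_ternary_in_C01:
  assumes f: "f \<in> O2" and pres: "\<And>\<rho>. (\<forall>b. replicate 3 b \<in> \<rho>) \<Longrightarrow> preserves \<rho> 3 f"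
  shows "f \<in> C01"
proof -
  define n where "n = fst f"
  define v where "v x = the (snd f x)" for x
  have n: "1 \<le> n" and undef: "\<And>x. length x \<noteq> n \<Longrightarrow> snd f x = None"
    and val: "\<And>x. length x = n \<Longrightarrow> snd f x = Some (v x)"
    using f by (auto simp: O2_def wf_pfun_def n_def v_def)
  have "(v x = v y \<and> v y = v z) \<or> (\<exists>i<n. x ! i = v x \<and> y ! i = v y \<and> z ! i = v z)"
    if "length x = n" "length y = n" "length z = n" for x y z
  proof -
    define \<rho> where "\<rho> = range (replicate 3) \<union> {[x ! i, y ! i, z ! i] | i. i < n}"
    have "map (\<lambda>p. the (snd f p)) [x, y, z] \<in> \<rho>"
    proof (rule preservesD)
      have "preserves \<rho> 3 f"
        by (rule pres) (simp add: \<rho>_def)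
      then show "preserves \<rho> (length [x, y, z]) f"
        by (simp add: numeral_3_eq_3)
    qed (use that val in \<open>auto simp: \<rho>_def n_def\<close>)
    then show ?thesis
      by (auto simp: \<rho>_def v_def numeral_3_eq_3)
  qed
  then consider b where "\<And>x. length x = n \<Longrightarrow> v x = b"
    | i where "i < n" "\<And>x. length x = n \<Longrightarrow> v x = x ! i"
    using constant_or_projection[of n v] by blast
  then show ?thesis
  proof cases
    case (1 b)
    then have "f = const_pf n b"
      by (auto simp: prod_eq_iff fun_eq_iff const_pf_def n_def undef val)
    then show ?thesis using const_pf_in_C01 n by simp
  next
    case (2 i)
    then have "f = proj n i"
      by (auto simp: prod_eq_iff fun_eq_iff proj_def n_def undef val)
    then show ?thesis using proj_in_C01 n 2 by simp
  qed
qed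

lemma pPol_in_I_str_C01:
  assumes ternary: "\<And>\<rho>. (\<forall>b. replicate 3 b \<in> \<rho>) \<Longrightarrow> (\<rho>, 3) \<in> R"
    and const: "\<And>\<rho> N b. (\<rho>, N) \<in> R \<Longrightarrow> replicate N b \<in> \<rho>"
  shows "pPol R \<in> I_str C01"
proof -
  have "const_pf 1 b \<in> pPol R" for b
    using const preserves_const_pf by (auto simp: pPol_def wf_pfun_def const_pf_def)
  then have "c0 \<in> pPol R" "c1 \<in> pPol R"
    by (metis c0_def const_pf_def, metis c1_def const_pf_def)
  then have "C01 \<subseteq> pPol R"
    using C01_subset strong_partial_clone_pPol strong_partial_clone_def by blast
  moreover have "pPol R \<inter> O2 \<subseteq> C01"
    using ternary by (auto simp: pPol_def intro: total_preserving_reflexive_ternary_in_C01)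
  ultimately show ?thesis
    using C01_subset_O2 strong_partial_clone_pPol by (auto simp: I_str_def)
qed

section \<open>Separating functions and relations\<close>

definition co_unit :: "nat \<Rightarrow> nat \<Rightarrow> bool list" where
  "co_unit n l = (replicate n True)[l := False]"

definition co_unit_fun :: "nat \<Rightarrow> pfun" where
  "co_unit_fun n = (n, \<lambda>xs. if xs = replicate n False then Some False
                          else if xs \<in> co_unit n ` {..<n} then Some True else None)"

definition false_count_rel :: "nat \<Rightarrow> bool list set" where
  "false_count_rel k = {c. count_list c False \<in> {0, 2, k + 1}}"

lemma length_co_unit [simp]: "length (co_unit n l) = n"
  by (simp add: co_unit_def)

lemma nth_co_unit: "i < n \<Longrightarrow> co_unit n l ! i = (i \<noteq> l)"
  by (cases "l < n") (simp_all add: co_unit_def nth_list_update)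

lemma inj_on_co_unit: "inj_on (co_unit n) {..<n}"
  by (rule inj_onI) (metis lessThan_iff nth_co_unit)

lemma co_unit_ne_zeros:
  assumes "2 \<le> n" shows "co_unit n l \<noteq> replicate n False"
proof -
  define i where "i = (if l = 0 then 1 else 0 :: nat)"
  have "i < n" "co_unit n l ! i"
    using assms by (auto simp: i_def nth_co_unit)
  then show ?thesis
    by auto
qed

lemma wf_co_unit_fun: "1 \<le> n \<Longrightarrow> wf_pfun (co_unit_fun n)"
  by (auto simp: wf_pfun_def co_unit_fun_def)

lemma co_unit_fun_defined_iff:
  "snd (co_unit_fun n) p \<noteq> None \<longleftrightarrow> p \<in> insert (replicate n False) (co_unit n ` {..<n})"
  by (auto simp: co_unit_fun_def)

lemma co_unit_fun_zeros: "the (snd (co_unit_fun n) (replicate n False)) = False"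
  by (simp add: co_unit_fun_def)

lemma co_unit_fun_co_unit: "2 \<le> n \<Longrightarrow> l < n \<Longrightarrow> the (snd (co_unit_fun n) (co_unit n l))"
  using co_unit_ne_zeros by (auto simp: co_unit_fun_def)

lemma co_unit_fun_eq_nth:
  assumes "snd (co_unit_fun n) p \<noteq> None" "i < n" "p \<noteq> co_unit n i"
  shows "the (snd (co_unit_fun n) p) = p ! i"
  using assms by (auto simp: co_unit_fun_def nth_co_unit split: if_splits)

lemma co_unit_fun_preserves_lower_arity:
  assumes "N < n" shows "preserves \<rho> N (co_unit_fun n)"
proof (rule preservesI)
  fix ps :: "bool list list"
  assume l: "length ps = N" and d: "\<forall>p\<in>set ps. snd (co_unit_fun n) p \<noteq> None"
    and c: "\<forall>i<fst (co_unit_fun n). map (\<lambda>p. p ! i) ps \<in> \<rho>"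
  \<comment> \<open>the N rows of ps avoid some co-unit vector, and on the rows the function is then a projection\<close>
  have "\<not> co_unit n ` {..<n} \<subseteq> set ps"
  proof
    assume "co_unit n ` {..<n} \<subseteq> set ps"
    then have "card (co_unit n ` {..<n}) \<le> length ps"
      using card_mono[OF finite_set] card_length le_trans by blast
    then show False
      using l assms by (simp add: card_image inj_on_co_unit)
  qed
  then obtain i where i: "i < n" "co_unit n i \<notin> set ps"
    by auto
  have "map (\<lambda>p. the (snd (co_unit_fun n) p)) ps = map (\<lambda>p. p ! i) ps"
  proof (rule map_cong)
    fix p assume "p \<in> set ps"
    then show "the (snd (co_unit_fun n) p) = p ! i"
      using d i by (intro co_unit_fun_eq_nth) auto
  qed simp
  moreover have "map (\<lambda>p. p ! i) ps \<in> \<rho>"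
    using c i by (simp add: co_unit_fun_def)
  ultimately show "map (\<lambda>p. the (snd (co_unit_fun n) p)) ps \<in> \<rho>"
    by (simp only:)
qed

lemma co_unit_fun_false_counts:
  fixes ps :: "bool list list"
  assumes n: "2 \<le> n" and d: "\<forall>p\<in>set ps. snd (co_unit_fun n) p \<noteq> None"
  defines "e \<equiv> count_list ps (replicate n False)" and "a l \<equiv> count_list ps (co_unit n l)"
  shows "length ps = e + (\<Sum>l<n. a l)"
    and "i < n \<Longrightarrow> count_list (map (\<lambda>p. p ! i) ps) False = e + a i"
    and "count_list (map (\<lambda>p. the (snd (co_unit_fun n) p)) ps) False = e"
proof -
  let ?D = "insert (replicate n False) (co_unit n ` {..<n})"
  have dom: "set ps \<subseteq> ?D"
    using d co_unit_fun_defined_iff by blast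
  have zeros: "replicate n False \<notin> co_unit n ` {..<n}"
    using co_unit_ne_zeros[OF n] by (metis imageE)
  have count_eq: "length (filter P ps) = length (filter (\<lambda>p. p \<in> S) ps)"
    if "\<And>p. p \<in> ?D \<Longrightarrow> P p \<longleftrightarrow> p \<in> S" for P S
    using dom that by (metis (no_types, lifting) filter_cong subsetD)
  have "length ps = sum (count_list ps) ?D"
    using dom by (simp add: sum_count_set)
  also have "\<dots> = e + (\<Sum>l<n. a l)"
    using zeros inj_on_co_unit by (simp add: e_def a_def sum.reindex)
  finally show "length ps = e + (\<Sum>l<n. a l)" .
  show "count_list (map (\<lambda>p. p ! i) ps) False = e + a i" if i: "i < n"
  proof -
    have "count_list (map (\<lambda>p. p ! i) ps) False
        = length (filter (\<lambda>p. p \<in> {replicate n False, co_unit n i}) ps)"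
      unfolding count_list_map
      by (rule count_eq) (use i inj_on_co_unit in \<open>auto simp: nth_co_unit inj_on_def\<close>)
    also have "\<dots> = e + a i"
      using co_unit_ne_zeros[OF n, of i]
      by (subst length_filter_mem_eq_sum_count_list) (simp_all add: e_def a_def)
    finally show ?thesis .
  qed
  have "count_list (map (\<lambda>p. the (snd (co_unit_fun n) p)) ps) False
      = length (filter (\<lambda>p. p \<in> {replicate n False}) ps)"
    unfolding count_list_map
    by (rule count_eq) (use zeros co_unit_fun_zeros co_unit_fun_co_unit[OF n] in auto)
  also have "\<dots> = e"
    by (subst length_filter_mem_eq_sum_count_list) (simp_all add: e_def)
  finally show "count_list (map (\<lambda>p. the (snd (co_unit_fun n) p)) ps) False = e" .
qed

lemma false_count_arith:
  fixes a :: "nat \<Rightarrow> nat"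
  assumes n: "2 \<le> n" "n \<noteq> k" and k: "1 \<le> k" and total: "e + (\<Sum>l<n. a l) = k + 1"
    and cols: "\<And>i. i < n \<Longrightarrow> e + a i \<in> {0, 2, k + 1}"
  shows "e \<in> {0, 2, k + 1}"
proof (rule ccontr)
  \<comment> \<open>e = 1 forces every a i to be 1, whence n = k; e \<ge> 3 forces two columns to have k + 1 zeros\<close>
  assume e: "e \<notin> {0, 2, k + 1}"
  have pair: "e + a i + a i' \<le> k + 1" if "i < n" "i' < n" "i \<noteq> i'" for i i'
  proof -
    have "sum a {i, i'} \<le> (\<Sum>l<n. a l)"
      using that by (intro sum_mono2) auto
    then show ?thesis using that total by simp
  qed
  show False
  proof (cases "e = 1")
    case True
    have "a i = 1" if i: "i < n" for i
    proof -
      obtain i' where "i' < n" "i' \<noteq> i"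
        using n by (metis less_2_cases_iff less_le_trans not_less_eq)
      then show ?thesis
        using cols[OF i] cols[of i'] pair[OF i, of i'] True k by auto
    qed
    then have "(\<Sum>l<n. a l) = n" by simp
    then show False using total True n by simp
  next
    case False
    then have "e + a 0 = k + 1" "e + a 1 = k + 1"
      using cols[of 0] cols[of 1] n e by auto
    then show False using pair[of 0 1] n e by simp
  qed
qed

lemma co_unit_fun_preserves_false_count_rel:
  assumes "2 \<le> n" "n \<noteq> k" "1 \<le> k"
  shows "preserves (false_count_rel k) (k + 1) (co_unit_fun n)"
proof (rule preservesI)
  fix ps :: "bool list list"
  assume l: "length ps = k + 1" and d: "\<forall>p\<in>set ps. snd (co_unit_fun n) p \<noteq> None"
    and c: "\<forall>i<fst (co_unit_fun n). map (\<lambda>p. p ! i) ps \<in> false_count_rel k"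
  note counts = co_unit_fun_false_counts[OF assms(1) d]
  have "count_list ps (replicate n False) \<in> {0, 2, k + 1}"
  proof (rule false_count_arith[OF assms])
    show "count_list ps (replicate n False) + (\<Sum>l<n. count_list ps (co_unit n l)) = k + 1"
      using counts(1) l by simp
    show "count_list ps (replicate n False) + count_list ps (co_unit n i) \<in> {0, 2, k + 1}"
      if "i < n" for i
    proof -
      have "count_list (map (\<lambda>p. p ! i) ps) False \<in> {0, 2, k + 1}"
        using c that by (simp add: co_unit_fun_def false_count_rel_def)
      then show ?thesis
        unfolding counts(2)[OF that] .
    qed
  qed
  then show "map (\<lambda>p. the (snd (co_unit_fun n) p)) ps \<in> false_count_rel k"
    using counts(3) by (simp add: false_count_rel_def)
qed

lemma co_unit_fun_not_preserves_false_count_rel: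
  assumes k: "2 \<le> k" shows "\<not> preserves (false_count_rel k) (k + 1) (co_unit_fun k)"
proof
  \<comment> \<open>every column of this matrix has exactly two zeros, its image only one\<close>
  define ps where "ps = replicate k False # map (co_unit k) [0..<k]"
  have d: "\<forall>p\<in>set ps. snd (co_unit_fun k) p \<noteq> None"
    unfolding co_unit_fun_defined_iff ps_def by auto
  note counts = co_unit_fun_false_counts[OF k d]
  have e: "count_list ps (replicate k False) = 1"
    using co_unit_ne_zeros[OF k] by (auto simp: ps_def count_list_0_iff dest: sym)
  have a: "count_list ps (co_unit k i) = 1" if "i < k" for i
  proof -
    have "count_list (map (co_unit k) [0..<k]) (co_unit k i) = count_list [0..<k] i"
      using that inj_on_co_unit by (intro count_list_inj_map) (auto simp: inj_on_def)
    also have "\<dots> = 1"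
      using that by (induction k) auto
    finally show ?thesis
      using co_unit_ne_zeros[OF k, of i] by (simp add: ps_def)
  qed
  assume "preserves (false_count_rel k) (k + 1) (co_unit_fun k)"
  then have "map (\<lambda>p. the (snd (co_unit_fun k) p)) ps \<in> false_count_rel k"
    using d counts(2) e a
    by (intro preservesD) (auto simp: ps_def false_count_rel_def co_unit_fun_def)
  then show False
    using counts(3) e k by (simp add: false_count_rel_def)
qed

section \<open>Continuum many clones\<close>

text \<open>The shift by 4 makes the arity of the witnesses exceed 3, so that they preserve all
  ternary relations.\<close>

definition separating_rels :: "nat set \<Rightarrow> (bool list set \<times> nat) set" where
  "separating_rels A = {(\<rho>, 3) | \<rho>. \<forall>b. replicate 3 b \<in> \<rho>}
                     \<union> {(false_count_rel (k + 4), k + 5) | k. k \<notin> A}"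

lemma pPol_separating_rels_in_I_str: "pPol (separating_rels A) \<in> I_str C01"
  by (rule pPol_in_I_str_C01)
    (auto simp: separating_rels_def false_count_rel_def count_list_replicate split: if_splits)

lemma co_unit_fun_in_pPol_separating_rels_iff:
  "co_unit_fun (k + 4) \<in> pPol (separating_rels A) \<longleftrightarrow> k \<in> A"
proof
  assume "co_unit_fun (k + 4) \<in> pPol (separating_rels A)"
  then have "k \<notin> A \<Longrightarrow> preserves (false_count_rel (k + 4)) (k + 4 + 1) (co_unit_fun (k + 4))"
    by (auto simp: pPol_def separating_rels_def)
  then show "k \<in> A"
    using co_unit_fun_not_preserves_false_count_rel[of "k + 4"] by auto
next
  assume "k \<in> A"
  then have "preserves (false_count_rel (k' + 4)) (k' + 5) (co_unit_fun (k + 4))"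
    if "k' \<notin> A" for k'
    using that co_unit_fun_preserves_false_count_rel[of "k + 4" "k' + 4"] by (auto simp: add.commute)
  then show "co_unit_fun (k + 4) \<in> pPol (separating_rels A)"
    using co_unit_fun_preserves_lower_arity[of 3 "k + 4"] wf_co_unit_fun[of "k + 4"]
    by (auto simp: pPol_def separating_rels_def)
qed

lemma inj_pPol_separating_rels: "inj (\<lambda>A. pPol (separating_rels A))"
  by (rule injI) (metis co_unit_fun_in_pPol_separating_rels_iff subsetI subset_antisym)

lemma countable_P2: "countable P2"
proof -
  define enc where "enc p = (fst p, map (snd p) (List.n_lists (fst p) [False, True]))" for p :: pfun
  have "inj_on enc P2"
  proof (rule inj_onI)
    fix p q assume p: "p \<in> P2" and q: "q \<in> P2" and e: "enc p = enc q"
    have "snd p xs = snd q xs" for xs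
    proof (cases "length xs = fst p")
      case True
      then have "xs \<in> set (List.n_lists (fst p) [False, True])"
        by (auto simp: set_n_lists)
      then show ?thesis using e by (auto simp: enc_def)
    next
      case False
      then show ?thesis using p q e by (simp add: P2_def wf_pfun_def enc_def)
    qed
    then show "p = q"
      using e by (simp add: enc_def prod_eq_iff fun_eq_iff)
  qed
  moreover have "countable (enc ` P2)"
    by simp
  ultimately show ?thesis
    using countable_image_inj_on by blast
qed

lemma I_str_C01_eqpoll_nat_sets: "I_str C01 \<approx> (UNIV :: nat set set)"
proof (rule lepoll_antisym)
  show "(UNIV :: nat set set) \<lesssim> I_str C01"
    unfolding lepoll_def using inj_pPol_separating_rels pPol_separating_rels_in_I_str by blast
  obtain g :: "pfun \<Rightarrow> nat" where "inj_on g P2"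
    using countable_P2 by (auto simp: countable_def)
  then have "Pow P2 \<lesssim> (UNIV :: nat set set)"
    unfolding lepoll_def using inj_on_image_Pow by blast
  moreover have "I_str C01 \<subseteq> Pow P2"
    by (auto simp: I_str_def strong_partial_clone_def partial_clone_def)
  ultimately show "I_str C01 \<lesssim> (UNIV :: nat set set)"
    using subset_imp_lepoll lepoll_trans by blast
qed

theorem mainTheorem8:
  shows "I_str C01 \<approx> (UNIV :: real set)"
  using eqpoll_trans[OF I_str_C01_eqpoll_nat_sets nat_sets_eqpoll_reals] .

end
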